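(* Let $\rho$ be a state with $\lambda(\rho)>0$. Then for all $\epsilon>0$ and all positive integers $n,k$, \[ \mu_k^\epsilon(\rho^{\otimes n})\le\log k+\log\lambda(\rho)+\log\left[1+\frac{2^{\widetilde H_{\max}^{\epsilon^2/4}(J^n|(S^\rho)^n)_{\delta_\rho^n}}}{k\,\lambda(\rho)}\right]. \]
   Context: $\rho$ is a $d\times d$ density matrix in a fixed computational basis; $\Delta$ is the dephasing map (keeping only diagonal entries), $\Pi_I=\sum_{i\in I}|i\rangle\langle i|$, logs base 2. $R^\rho=\Delta(\rho)^{-1/2}\rho\Delta(\rho)^{-1/2}$ (inverse on the support). $\lambda(\rho)=\max\{|R^\rho_{ij}|:1\le i<j\le d,\ |R^\rho_{ij}|<1\}$, set to $0$ if this set is empty. $\mu_k(\sigma)=\max_{I\subseteq[\dim],|I|\le k}\log\|\Pi_IR^\sigma\Pi_I\|_\infty$ and $\mu_k^\epsilon(\omega)=\min_{\sigma:\|\sigma-\omega\|_1\le\epsilon}\mu_k(\sigma)$ over density matrices $\sigma$. Let $G_\rho$ be the graph on $[d]$ with edges $(i,j)$ whenever $|\rho_{ij}|=\sqrt{\rho_{ii}\rho_{jj}}>0$; its connected components $\{I_s\}_{s\in\mathcal S}$ partition $[d]$. Let $\delta_\rho$ be the probability distribution $\delta_\rho(j)=\rho_{jj}$ on $[d]$, $J$ the identity random variable on $[d]$ and $S^\rho$ the function $j\mapsto s$ with $j\in I_s$; $\delta_\rho^n$ is the i.i.d. product distribution on $[d]^n$ and $J^n,(S^\rho)^n$ the corresponding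 tuples. For random variables $X,Y$ with joint distribution $q$ on a finite set, $H_{\max}(X|Y)_q=\max_{y:q(y)>0}\log|\mathrm{supp}\,q_{X|Y=y}|$. For a probability vector $p$ on a finite set $\Omega$ and $\epsilon>0$, $V_\epsilon(p)=\{\Pi_Ip/\sum_{i\in I}p_i:\ I\subseteq\Omega\}\cap\{q:|q-p|_1\le\epsilon\}$, and $\widetilde H^\epsilon_{\max}(X|Y)_p=\min_{q\in V_\epsilon(p)}H_{\max}(X|Y)_q$. *)

theory Defs
  imports Complex_Main
begin

text \<open>Matrices are functions 'i => 'i => complex, considered on a finite carrier set B
  of indices (the computational basis). Vectors are functions 'i => complex.\<close>

definition vnorm :: "'i set \<Rightarrow> ('i \<Rightarrow> complex) \<Rightarrow> real" where
  "vnorm B v = sqrt (\<Sum>i\<in>B. (cmod (v i))^2)"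

definition mvec :: "'i set \<Rightarrow> ('i \<Rightarrow> 'i \<Rightarrow> complex) \<Rightarrow> ('i \<Rightarrow> complex) \<Rightarrow> 'i \<Rightarrow> complex" where
  "mvec B M v = (\<lambda>i. \<Sum>j\<in>B. M i j * v j)"

definition opnorm :: "'i set \<Rightarrow> ('i \<Rightarrow> 'i \<Rightarrow> complex) \<Rightarrow> real" where
  "opnorm B M = Sup {vnorm B (mvec B M v) | v. vnorm B v = 1}"

definition mmul :: "'i set \<Rightarrow> ('i \<Rightarrow> 'i \<Rightarrow> complex) \<Rightarrow> ('i \<Rightarrow> 'i \<Rightarrow> complex) \<Rightarrow> 'i \<Rightarrow> 'i \<Rightarrow> complex" where
  "mmul B X Y = (\<lambda>i k. \<Sum>j\<in>B. X i j * Y j k)"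

definition mtrace :: "'i set \<Rightarrow> ('i \<Rightarrow> 'i \<Rightarrow> complex) \<Rightarrow> complex" where
  "mtrace B X = (\<Sum>i\<in>B. X i i)"

definition trnorm :: "'i set \<Rightarrow> ('i \<Rightarrow> 'i \<Rightarrow> complex) \<Rightarrow> real" where
  "trnorm B X = Sup {cmod (mtrace B (mmul B X Y)) | Y. opnorm B Y \<le> 1}"

definition density :: "'i set \<Rightarrow> ('i \<Rightarrow> 'i \<Rightarrow> complex) \<Rightarrow> bool" where
  "density B M \<longleftrightarrow>
     (\<forall>i\<in>B. \<forall>j\<in>B. M i j = cnj (M j i)) \<and>
     (\<forall>v. Re (\<Sum>i\<in>B. \<Sum>j\<in>B. cnj (v i) * M i j * v j) \<ge> 0) \<and>
     mtrace B M = 1"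

text \<open>R^M = Delta(M)^{-1/2} M Delta(M)^{-1/2}, inverse taken on the support.\<close>
definition Rmat :: "('i \<Rightarrow> 'i \<Rightarrow> complex) \<Rightarrow> 'i \<Rightarrow> 'i \<Rightarrow> complex" where
  "Rmat M i j = (if Re (M i i) > 0 \<and> Re (M j j) > 0
      then M i j / complex_of_real (sqrt (Re (M i i) * Re (M j j))) else 0)"

definition proj :: "'i set \<Rightarrow> ('i \<Rightarrow> 'i \<Rightarrow> complex) \<Rightarrow> 'i \<Rightarrow> 'i \<Rightarrow> complex" where
  "proj I M = (\<lambda>i j. if i \<in> I \<and> j \<in> I then M i j else 0)"

text \<open>mu_k(sigma) = max_{I, |I|<=k} log ||Pi_I R Pi_I||_inf (log is monotone).\<close>
definition mu :: "nat \<Rightarrow> 'i set \<Rightarrow> ('i \<Rightarrow> 'i \<Rightarrow> complex) \<Rightarrow> real" where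
  "mu k B \<sigma> = log 2 (Max {opnorm B (proj I (Rmat \<sigma>)) | I. I \<subseteq> B \<and> card I \<le> k})"

definition mu_eps :: "nat \<Rightarrow> real \<Rightarrow> 'i set \<Rightarrow> ('i \<Rightarrow> 'i \<Rightarrow> complex) \<Rightarrow> real" where
  "mu_eps k \<epsilon> B \<omega> = Inf {mu k B \<sigma> | \<sigma>. density B \<sigma> \<and> trnorm B (\<lambda>i j. \<sigma> i j - \<omega> i j) \<le> \<epsilon>}"

definition lam :: "nat \<Rightarrow> (nat \<Rightarrow> nat \<Rightarrow> complex) \<Rightarrow> real" where
  "lam d \<rho> = (let S = {cmod (Rmat \<rho> i j) | i j. i < j \<and> j < d \<and> cmod (Rmat \<rho> i j) < 1}
              in if S = {} then 0 else Max S)"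

definition tuples :: "nat \<Rightarrow> nat \<Rightarrow> nat list set" where
  "tuples d n = {xs. length xs = n \<and> set xs \<subseteq> {0..<d}}"

definition tensor_pow :: "nat \<Rightarrow> (nat \<Rightarrow> nat \<Rightarrow> complex) \<Rightarrow> nat list \<Rightarrow> nat list \<Rightarrow> complex" where
  "tensor_pow n \<rho> = (\<lambda>xs ys. \<Prod>i<n. \<rho> (xs ! i) (ys ! i))"

text \<open>Graph G_rho and its connected components; S^rho maps j to its component.\<close>
definition gedge :: "nat \<Rightarrow> (nat \<Rightarrow> nat \<Rightarrow> complex) \<Rightarrow> (nat \<times> nat) set" where
  "gedge d \<rho> = {(i, j). i < d \<and> j < d \<and> i \<noteq> j \<and>
      cmod (\<rho> i j) = sqrt (Re (\<rho> i i) * Re (\<rho> j j)) \<and> sqrt (Re (\<rho> i i) * Re (\<rho> j j)) > 0}"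

definition Scomp :: "nat \<Rightarrow> (nat \<Rightarrow> nat \<Rightarrow> complex) \<Rightarrow> nat \<Rightarrow> nat set" where
  "Scomp d \<rho> j = {i. (j, i) \<in> (gedge d \<rho> \<union> (gedge d \<rho>)\<inverse>)\<^sup>*}"

definition delta :: "(nat \<Rightarrow> nat \<Rightarrow> complex) \<Rightarrow> nat \<Rightarrow> real" where
  "delta \<rho> j = Re (\<rho> j j)"

definition delta_pow :: "nat \<Rightarrow> (nat \<Rightarrow> nat \<Rightarrow> complex) \<Rightarrow> nat list \<Rightarrow> real" where
  "delta_pow n \<rho> xs = (\<Prod>i<n. delta \<rho> (xs ! i))"

text \<open>H_max(X|Y)_q with X the identity on Omega and Y a function of X.\<close>
definition hmax :: "'a set \<Rightarrow> ('a \<Rightarrow> real) \<Rightarrow> ('a \<Rightarrow> 'b) \<Rightarrow> real" where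
  "hmax \<Omega> q Y = Max {log 2 (real (card {x\<in>\<Omega>. q x > 0 \<and> Y x = y})) | y. \<exists>x\<in>\<Omega>. q x > 0 \<and> Y x = y}"

definition Vset :: "'a set \<Rightarrow> ('a \<Rightarrow> real) \<Rightarrow> real \<Rightarrow> ('a \<Rightarrow> real) set" where
  "Vset \<Omega> p \<epsilon> =
     {q. \<exists>I\<subseteq>\<Omega>. (\<Sum>i\<in>I. p i) > 0 \<and> q = (\<lambda>x. if x \<in> I then p x / (\<Sum>i\<in>I. p i) else 0)}
     \<inter> {q. (\<Sum>x\<in>\<Omega>. \<bar>q x - p x\<bar>) \<le> \<epsilon>}"

definition htilde :: "'a set \<Rightarrow> ('a \<Rightarrow> real) \<Rightarrow> ('a \<Rightarrow> 'b) \<Rightarrow> real \<Rightarrow> real" where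
  "htilde \<Omega> p Y \<epsilon> = Min ((\<lambda>q. hmax \<Omega> q Y) ` Vset \<Omega> p \<epsilon>)"

end

theory Submission
  imports Defs "HOL-Analysis.Convex"
begin

text \<open>A minimiser of the smoothed entropy \<open>H\<close> is \<open>\<delta>\<^sub>\<rho>\<^sup>n\<close> conditioned on a set \<open>I\<close> of
  tuples of mass \<open>t\<close> with \<open>2(1 - t) \<le> \<epsilon>\<^sup>2/4\<close>. Conditioning \<open>\<rho>\<^sup>\<otimes>\<^sup>n\<close> on \<open>I\<close> as well gives
  \<open>\<sigma> = \<Pi>\<^sub>I \<rho>\<^sup>\<otimes>\<^sup>n \<Pi>\<^sub>I / t\<close>, which by the gentle measurement bound \<open>sqrt (8(1 - t))\<close>
  lies within trace distance \<open>\<epsilon>\<close> of \<open>\<rho>\<^sup>\<otimes>\<^sup>n\<close>; and \<open>R\<^sup>\<sigma>\<close> is \<open>R\<^sup>\<rho>\<^sup>\<otimes>\<^sup>n\<close> restricted to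
  \<open>I\<close>, since \<open>R\<close> does not see the normalisation. The entries of \<open>R\<^sup>\<rho>\<^sup>\<otimes>\<^sup>n\<close> are products of
  entries of \<open>R\<^sup>\<rho>\<close>: all have modulus at most \<open>1\<close>, and at most \<open>\<lambda>(\<rho>)\<close> as soon as the two
  tuples differ in their component labels \<open>(S\<^sup>\<rho>)\<^sup>n\<close>. So for \<open>|K| \<le> k\<close> the entries in each
  row of \<open>\<Pi>\<^sub>K R\<^sup>\<sigma> \<Pi>\<^sub>K\<close> have absolute sum at most the size of a label class in the
  support of the minimiser, which is at most \<open>2\<^sup>H\<close>, plus \<open>k \<lambda>(\<rho>)\<close>; Schur's test then gives
  \<open>\<mu>\<^sub>k(\<sigma>) \<le> log (2\<^sup>H + k \<lambda>(\<rho>))\<close>, which is the right-hand side.\<close>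

section \<open>Vector norms and the operator norm\<close>

lemma vnorm_nonneg: "vnorm B v \<ge> 0"
  unfolding vnorm_def by (simp add: sum_nonneg)

lemma vnorm_power2: "(vnorm B v)^2 = (\<Sum>i\<in>B. (cmod (v i))^2)"
  unfolding vnorm_def by (simp add: sum_nonneg)

lemma vnorm_cnj: "vnorm B (\<lambda>i. cnj (u i)) = vnorm B u"
  unfolding vnorm_def by simp

lemma vnorm_scale: "vnorm B (\<lambda>i. c * v i) = cmod c * vnorm B v"
  unfolding vnorm_def
  by (simp add: norm_mult power_mult_distrib real_sqrt_mult flip: sum_distrib_left)

lemma vnorm_eq_0D:
  assumes "finite B" "vnorm B v = 0" "i \<in> B"
  shows "v i = 0"
  using assms by (simp add: vnorm_def sum_nonneg_eq_0_iff)

lemma vnorm_unit: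
  assumes "finite B" "b \<in> B"
  shows "vnorm B (\<lambda>i. if i = b then 1 else 0) = 1"
  using assms by (simp add: vnorm_def if_distrib[of cmod] if_distrib[of "\<lambda>x. x^2"] cong: if_cong)

lemma sum_mult_le_sqrt_sum_power2:
  fixes a b :: "'a \<Rightarrow> real"
  shows "(\<Sum>i\<in>I. a i * b i) \<le> sqrt (\<Sum>i\<in>I. (a i)^2) * sqrt (\<Sum>i\<in>I. (b i)^2)"
proof -
  have "(\<Sum>i\<in>I. a i * b i)^2 \<le> (\<Sum>i\<in>I. (a i)^2) * (\<Sum>i\<in>I. (b i)^2)"
    by (rule Cauchy_Schwarz_ineq_sum)
  then show ?thesis
    by (metis real_le_rsqrt real_sqrt_mult)
qed

lemma norm_sum_mult_le_vnorm: "cmod (\<Sum>i\<in>B. u i * w i) \<le> vnorm B u * vnorm B w"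
proof -
  have "cmod (\<Sum>i\<in>B. u i * w i) \<le> (\<Sum>i\<in>B. cmod (u i) * cmod (w i))"
    by (metis (no_types, lifting) norm_mult norm_sum sum.cong)
  also have "\<dots> \<le> vnorm B u * vnorm B w"
    unfolding vnorm_def by (rule sum_mult_le_sqrt_sum_power2)
  finally show ?thesis .
qed

lemma vnorm_mvec_le_Schur:
  assumes "finite B" and r: "r \<ge> 0"
    and rows: "\<And>i. i \<in> B \<Longrightarrow> (\<Sum>j\<in>B. cmod (M i j)) \<le> r"
    and cols: "\<And>j. j \<in> B \<Longrightarrow> (\<Sum>i\<in>B. cmod (M i j)) \<le> r"
  shows "vnorm B (mvec B M v) \<le> r * vnorm B v"
proof -
  have row: "(cmod (mvec B M v i))^2 \<le> r * (\<Sum>j\<in>B. cmod (M i j) * (cmod (v j))^2)" if i: "i \<in> B" for i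
  proof -
    \<comment> \<open>Cauchy--Schwarz after splitting each weight as \<open>sqrt |M i j| * sqrt |M i j|\<close>\<close>
    have "cmod (mvec B M v i) \<le> (\<Sum>j\<in>B. cmod (M i j) * cmod (v j))"
      unfolding mvec_def by (metis (no_types, lifting) norm_mult norm_sum sum.cong)
    also have "\<dots> = (\<Sum>j\<in>B. sqrt (cmod (M i j)) * (sqrt (cmod (M i j)) * cmod (v j)))"
      by (simp add: mult.assoc[symmetric])
    also have "\<dots> \<le> sqrt (\<Sum>j\<in>B. cmod (M i j)) * sqrt (\<Sum>j\<in>B. cmod (M i j) * (cmod (v j))^2)"
      using sum_mult_le_sqrt_sum_power2[of "\<lambda>j. sqrt (cmod (M i j))" "\<lambda>j. sqrt (cmod (M i j)) * cmod (v j)" B]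
      by (simp add: power_mult_distrib)
    finally have "(cmod (mvec B M v i))^2
        \<le> (sqrt (\<Sum>j\<in>B. cmod (M i j)) * sqrt (\<Sum>j\<in>B. cmod (M i j) * (cmod (v j))^2))^2"
      by (simp add: power_mono)
    also have "\<dots> = (\<Sum>j\<in>B. cmod (M i j)) * (\<Sum>j\<in>B. cmod (M i j) * (cmod (v j))^2)"
      by (simp add: power_mult_distrib sum_nonneg)
    also have "\<dots> \<le> r * (\<Sum>j\<in>B. cmod (M i j) * (cmod (v j))^2)"
      by (rule mult_right_mono[OF rows[OF i]]) (simp add: sum_nonneg)
    finally show ?thesis .
  qed
  have "(vnorm B (mvec B M v))^2 \<le> (\<Sum>i\<in>B. r * (\<Sum>j\<in>B. cmod (M i j) * (cmod (v j))^2))"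
    unfolding vnorm_power2 by (rule sum_mono) (rule row)
  also have "\<dots> = r * (\<Sum>j\<in>B. (\<Sum>i\<in>B. cmod (M i j)) * (cmod (v j))^2)"
    unfolding sum_distrib_left sum_distrib_right by (subst sum.swap) (simp add: ac_simps)
  also have "\<dots> \<le> r * (\<Sum>j\<in>B. r * (cmod (v j))^2)"
    by (intro mult_left_mono[OF _ r] sum_mono mult_right_mono[OF cols]) auto
  also have "\<dots> = (r * vnorm B v)^2"
    unfolding power_mult_distrib vnorm_power2 by (simp add: sum_distrib_left power2_eq_square mult.assoc)
  finally show ?thesis
    using power2_le_imp_le[of "vnorm B (mvec B M v)" "r * vnorm B v"] r vnorm_nonneg[of B v] by simp
qed

lemma bdd_above_opnorm:
  assumes "finite B"
  shows "bdd_above {vnorm B (mvec B M v) | v. vnorm B v = 1}"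
proof (rule bdd_aboveI)
  define r where "r = (\<Sum>i\<in>B. \<Sum>j\<in>B. cmod (M i j))"
  have rows: "(\<Sum>j\<in>B. cmod (M i j)) \<le> r" if "i \<in> B" for i
    unfolding r_def using assms that
    by (intro member_le_sum[of i B "\<lambda>i. \<Sum>j\<in>B. cmod (M i j)"]) (auto intro: sum_nonneg)
  have cols: "(\<Sum>i\<in>B. cmod (M i j)) \<le> r" if "j \<in> B" for j
    unfolding r_def using assms that
    by (subst sum.swap, intro member_le_sum[of j B "\<lambda>j. \<Sum>i\<in>B. cmod (M i j)"]) (auto intro: sum_nonneg)
  have "r \<ge> 0" unfolding r_def by (intro sum_nonneg) auto
  then have bound: "vnorm B (mvec B M v) \<le> r * vnorm B v" for v
    by (rule vnorm_mvec_le_Schur[OF assms _ rows cols])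
  show "x \<le> r" if "x \<in> {vnorm B (mvec B M v) | v. vnorm B v = 1}" for x
    using that by clarify (metis bound mult.right_neutral)
qed

lemma vnorm_mvec_le_opnorm:
  assumes "finite B" "vnorm B v = 1"
  shows "vnorm B (mvec B M v) \<le> opnorm B M"
  unfolding opnorm_def using assms by (auto intro!: cSup_upper bdd_above_opnorm)

lemma opnorm_le:
  assumes "finite B" "B \<noteq> {}" "\<And>v. vnorm B v = 1 \<Longrightarrow> vnorm B (mvec B M v) \<le> r"
  shows "opnorm B M \<le> r"
proof -
  obtain b where "b \<in> B" using assms by auto
  then have "{vnorm B (mvec B M v) | v. vnorm B v = 1} \<noteq> {}"
    using vnorm_unit[OF assms(1)] by blast
  then show ?thesis unfolding opnorm_def using assms(3) by (auto intro!: cSup_least)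
qed

lemma opnorm_le_Schur:
  assumes "finite B" "B \<noteq> {}" "r \<ge> 0"
    and "\<And>i. i \<in> B \<Longrightarrow> (\<Sum>j\<in>B. cmod (M i j)) \<le> r"
    and "\<And>j. j \<in> B \<Longrightarrow> (\<Sum>i\<in>B. cmod (M i j)) \<le> r"
  shows "opnorm B M \<le> r"
proof (rule opnorm_le[OF assms(1,2)])
  show "vnorm B (mvec B M v) \<le> r" if "vnorm B v = 1" for v
    using vnorm_mvec_le_Schur[of B r M v] assms that by simp
qed

lemma vnorm_mvec_le:
  assumes "finite B"
  shows "vnorm B (mvec B M v) \<le> opnorm B M * vnorm B v"
proof (cases "vnorm B v = 0")
  case True
  then have "mvec B M v = (\<lambda>i. 0)"
    using vnorm_eq_0D[OF assms] unfolding mvec_def by (simp add: sum.neutral)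
  then show ?thesis using True by (simp add: vnorm_def)
next
  case False
  define c where "c = vnorm B v"
  have c: "c > 0" using False vnorm_nonneg c_def by (metis less_eq_real_def)
  have "vnorm B (\<lambda>i. of_real (1 / c) * v i) = 1"
    unfolding vnorm_scale using c c_def by (simp add: norm_divide)
  then have "vnorm B (mvec B M (\<lambda>i. of_real (1 / c) * v i)) \<le> opnorm B M"
    by (rule vnorm_mvec_le_opnorm[OF assms])
  moreover have "mvec B M (\<lambda>i. of_real (1 / c) * v i) = (\<lambda>i. of_real (1 / c) * mvec B M v i)"
    unfolding mvec_def by (auto simp: sum_distrib_left ac_simps)
  then have "vnorm B (mvec B M (\<lambda>i. of_real (1 / c) * v i)) = vnorm B (mvec B M v) / c"
    by (simp only: vnorm_scale) (use c in \<open>simp add: norm_divide\<close>)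
  ultimately have "vnorm B (mvec B M v) / c \<le> opnorm B M"
    by simp
  then show ?thesis using c c_def by (simp add: field_simps)
qed

section \<open>Positive semidefinite matrices and Gram factorisation\<close>

definition qf :: "'i set \<Rightarrow> ('i \<Rightarrow> 'i \<Rightarrow> complex) \<Rightarrow> ('i \<Rightarrow> complex) \<Rightarrow> complex" where
  "qf B A v = (\<Sum>i\<in>B. \<Sum>j\<in>B. cnj (v i) * A i j * v j)"

definition herm :: "'i set \<Rightarrow> ('i \<Rightarrow> 'i \<Rightarrow> complex) \<Rightarrow> bool" where
  "herm B A \<longleftrightarrow> (\<forall>i\<in>B. \<forall>j\<in>B. A i j = cnj (A j i))"

definition psd :: "'i set \<Rightarrow> ('i \<Rightarrow> 'i \<Rightarrow> complex) \<Rightarrow> bool" where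
  "psd B A \<longleftrightarrow> (\<forall>v. Re (qf B A v) \<ge> 0)"

definition gram :: "'r set \<Rightarrow> ('r \<Rightarrow> 'i \<Rightarrow> complex) \<Rightarrow> 'i \<Rightarrow> 'i \<Rightarrow> complex" where
  "gram R G x y = (\<Sum>r\<in>R. cnj (G r x) * G r y)"

lemma cnj_mult_self: "cnj z * z = complex_of_real ((cmod z)^2)"
  by (metis complex_norm_square mult.commute)

lemma density_iff: "density B A \<longleftrightarrow> herm B A \<and> psd B A \<and> mtrace B A = 1"
  unfolding density_def herm_def psd_def qf_def by blast

lemma qf_insert:
  assumes "finite B" "a \<notin> B"
  shows "qf (insert a B) A w = cnj (w a) * A a a * w a + cnj (w a) * (\<Sum>j\<in>B. A a j * w j)
     + (\<Sum>i\<in>B. cnj (w i) * A i a) * w a + qf B A w"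
  using assms unfolding qf_def
  by (simp add: sum.distrib sum_distrib_left sum_distrib_right mult.assoc)

lemma qf_eq_on_support:
  assumes "finite B" "S \<subseteq> B" "\<And>i. i \<notin> S \<Longrightarrow> v i = 0"
  shows "qf B A v = qf S A v"
proof -
  have "qf B A v = (\<Sum>i\<in>S. \<Sum>j\<in>B. cnj (v i) * A i j * v j)"
    unfolding qf_def by (rule sum.mono_neutral_right[OF assms(1,2)]) (auto simp: assms(3))
  also have "\<dots> = qf S A v"
    unfolding qf_def
    by (rule sum.cong[OF refl], rule sum.mono_neutral_right[OF assms(1,2)]) (auto simp: assms(3))
  finally show ?thesis .
qed

lemma herm_diag:
  assumes "herm B A" "a \<in> B"
  shows "A a a = complex_of_real (Re (A a a))"
proof -
  have "A a a = cnj (A a a)" using assms unfolding herm_def by blast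
  then show ?thesis by (simp add: complex_eq_iff)
qed

lemma psd_diag_nonneg:
  assumes "finite B" "psd B A" "a \<in> B"
  shows "Re (A a a) \<ge> 0"
proof -
  define v where "v = (\<lambda>i. if i = a then (1::complex) else 0)"
  have "qf B A v = qf {a} A v" by (rule qf_eq_on_support) (use assms in \<open>auto simp: v_def\<close>)
  also have "\<dots> = A a a" by (simp add: qf_def v_def)
  finally show ?thesis using assms(2) unfolding psd_def by metis
qed

lemma psd_row_eq_0_if_diag_eq_0:
  assumes "finite B" "herm B A" "psd B A" "a \<in> B" "j \<in> B" "a \<noteq> j" "A a a = 0"
  shows "A a j = 0"
proof (rule ccontr)
  assume nz: "A a j \<noteq> 0"
  \<comment> \<open>test vector \<open>c e\<^sub>a + e\<^sub>j\<close> with \<open>c\<close> a large negative multiple of \<open>A a j\<close>\<close>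
  define m where "m = (cmod (A a j))^2"
  have m: "m > 0" using nz by (simp add: m_def)
  define t where "t = (\<bar>Re (A j j)\<bar> + 1) / m"
  define c where "c = - complex_of_real t * A a j"
  define v where "v = (\<lambda>i. if i = a then c else if i = j then 1 else 0)"
  have "qf B A v = qf {a, j} A v" by (rule qf_eq_on_support) (use assms in \<open>auto simp: v_def\<close>)
  also have "\<dots> = cnj c * A a j + A j a * c + A j j"
    using assms(6,7) by (simp add: qf_def v_def)
  finally have qf_v: "qf B A v = cnj c * A a j + cnj (A a j) * c + A j j"
    using assms(2,4,5) unfolding herm_def by metis
  have "cnj (A a j) * A a j = complex_of_real m"
    unfolding m_def by (rule cnj_mult_self)
  then have "Re (qf B A v) = - 2 * t * m + Re (A j j)"
    unfolding qf_v c_def by (simp add: algebra_simps)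
  also have "\<dots> = - 2 * (\<bar>Re (A j j)\<bar> + 1) + Re (A j j)"
    using m by (simp add: t_def)
  also have "\<dots> < 0" by (cases "Re (A j j) \<ge> 0") auto
  finally show False using assms(3) unfolding psd_def by (metis not_le)
qed

lemma herm_cong:
  "(\<And>i j. i \<in> B \<Longrightarrow> j \<in> B \<Longrightarrow> A i j = A' i j) \<Longrightarrow> herm B A \<longleftrightarrow> herm B A'"
  unfolding herm_def by auto

lemma psd_cong:
  "(\<And>i j. i \<in> B \<Longrightarrow> j \<in> B \<Longrightarrow> A i j = A' i j) \<Longrightarrow> psd B A \<longleftrightarrow> psd B A'"
  unfolding psd_def qf_def by (simp cong: sum.cong)

lemma psd_subset:
  assumes "finite B" "psd B A" "S \<subseteq> B"
  shows "psd S A"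
  unfolding psd_def
proof
  fix v
  have "qf S A v = qf S A (\<lambda>i. if i \<in> S then v i else 0)"
    unfolding qf_def by (intro sum.cong) auto
  also have "\<dots> = qf B A (\<lambda>i. if i \<in> S then v i else 0)"
    by (rule qf_eq_on_support[symmetric]) (use assms in auto)
  finally show "Re (qf S A v) \<ge> 0" using assms(2) unfolding psd_def by simp
qed

lemma psd_Schur_complement:
  assumes fin: "finite B" and a: "a \<notin> B"
    and herm: "herm (insert a B) A" and psd: "psd (insert a B) A"
  shows "psd B (\<lambda>i j. A i j - A i a * A a j / A a a)"
  unfolding psd_def
proof
  fix v
  \<comment> \<open>the form of the Schur complement at \<open>v\<close> is the form of \<open>A\<close> at \<open>v\<close> extended by \<open>c\<close> at \<open>a\<close>\<close>
  define s where "s = (\<Sum>j\<in>B. A a j * v j)"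
  define c where "c = - s / A a a"
  define w where "w = v(a := c)"
  have "A i a = cnj (A a i)" if "i \<in> B" for i
    using herm that unfolding herm_def by blast
  then have s_cnj: "(\<Sum>i\<in>B. cnj (v i) * A i a) = cnj s"
    unfolding s_def by (simp add: cnj_sum mult.commute)
  have Aaa: "cnj (A a a) = A a a"
    using herm unfolding herm_def by simp
  have "qf B (\<lambda>i j. A i j - A i a * A a j / A a a) v
      = qf B A v - (\<Sum>i\<in>B. cnj (v i) * A i a) * s / A a a"
    unfolding qf_def s_def
    by (simp add: algebra_simps sum_subtractf sum_distrib_left sum_distrib_right sum_divide_distrib)
  also have "\<dots> = cnj c * A a a * c + cnj c * s + cnj s * c + qf B A v"
    unfolding s_cnj c_def using Aaa by (cases "A a a = 0") (auto simp: field_simps)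
  also have "\<dots> = qf (insert a B) A w"
  proof -
    have "(\<Sum>j\<in>B. A a j * w j) = s"
      unfolding s_def w_def using a by (intro sum.cong) auto
    moreover have "(\<Sum>i\<in>B. cnj (w i) * A i a) = cnj s"
      unfolding s_cnj[symmetric] w_def using a by (intro sum.cong) auto
    moreover have "qf B A w = qf B A v"
      unfolding qf_def w_def using a by (intro sum.cong) auto
    ultimately show ?thesis unfolding qf_insert[OF fin a] by (simp add: w_def)
  qed
  finally show "Re (qf B (\<lambda>i j. A i j - A i a * A a j / A a a) v) \<ge> 0"
    using psd unfolding psd_def by simp
qed

lemma Cholesky_step:
  assumes fin: "finite B" and a: "a \<notin> B"
    and herm: "herm (insert a B) A" and psd: "psd (insert a B) A"
  obtains u where "\<And>j. j \<in> insert a B \<Longrightarrow> A a j = cnj (u a) * u j"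
    and "herm B (\<lambda>i j. A i j - cnj (u i) * u j)"
    and "psd B (\<lambda>i j. A i j - cnj (u i) * u j)"
proof -
  define \<alpha> where "\<alpha> = Re (A a a)"
  have \<alpha>: "\<alpha> \<ge> 0" unfolding \<alpha>_def using psd_diag_nonneg[OF _ psd] fin by simp
  have Aaa: "A a a = complex_of_real \<alpha>" unfolding \<alpha>_def using herm_diag[OF herm] by simp
  define u where "u j = (if \<alpha> > 0 then A a j / complex_of_real (sqrt \<alpha>) else 0)" for j
  have herm_a: "A i a = cnj (A a i)" if "i \<in> insert a B" for i
    using herm that unfolding herm_def by blast
  have uu: "cnj (u i) * u j = (if \<alpha> > 0 then A i a * A a j / A a a else 0)"
    if "i \<in> insert a B" for i j
    unfolding u_def Aaa herm_a[OF that] by (auto simp flip: of_real_mult)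
  have row: "A a j = cnj (u a) * u j" if "j \<in> insert a B" for j
  proof (cases "\<alpha> > 0")
    case True
    then show ?thesis unfolding uu[OF insertI1] Aaa by simp
  next
    case False
    then show ?thesis
      using psd_row_eq_0_if_diag_eq_0[OF _ herm psd, of a j] fin a that Aaa \<alpha> by (cases "j = a") (auto simp: uu)
  qed
  have herm': "herm B (\<lambda>i j. A i j - cnj (u i) * u j)"
    unfolding herm_def
  proof (intro ballI)
    fix i j assume "i \<in> B" "j \<in> B"
    then have "A i j = cnj (A j i)" using herm unfolding herm_def by blast
    then show "A i j - cnj (u i) * u j = cnj (A j i - cnj (u j) * u i)" by (simp add: mult.commute)
  qed
  have "psd B (\<lambda>i j. A i j - cnj (u i) * u j)"
  proof (cases "\<alpha> > 0")
    case True
    then show ?thesis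
      using psd_Schur_complement[OF fin a herm psd] by (subst psd_cong) (auto simp: uu)
  next
    case False
    then show ?thesis
      using psd_subset[OF _ psd, of B] fin by (subst psd_cong) (auto simp: uu)
  qed
  with row herm' show thesis by (rule that)
qed

lemma gram_factorization:
  assumes "finite B" "herm B A" "psd B A"
  obtains L where "\<And>i j. i \<in> B \<Longrightarrow> j \<in> B \<Longrightarrow> A i j = gram B L i j"
proof -
  have "\<exists>L. \<forall>i\<in>B. \<forall>j\<in>B. A i j = gram B L i j"
    using assms
  proof (induction B arbitrary: A rule: finite_induct)
    case empty
    then show ?case by simp
  next
    case (insert a B A)
    obtain u where row: "\<And>j. j \<in> insert a B \<Longrightarrow> A a j = cnj (u a) * u j"
      and herm': "herm B (\<lambda>i j. A i j - cnj (u i) * u j)"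
      and psd': "psd B (\<lambda>i j. A i j - cnj (u i) * u j)"
      using Cholesky_step[OF insert.hyps(1,2) insert.prems] by blast
    obtain L' where L': "\<forall>i\<in>B. \<forall>j\<in>B. A i j - cnj (u i) * u j = gram B L' i j"
      using insert.IH[OF herm' psd'] by blast
    define L where "L r j = (if r = a then u j else if j = a then 0 else L' r j)" for r j
    have gram_L: "gram (insert a B) L i j
        = cnj (u i) * u j + (if i = a \<or> j = a then 0 else gram B L' i j)" for i j
      using insert.hyps by (auto simp: gram_def L_def intro!: sum.neutral sum.cong)
    have "A i j = gram (insert a B) L i j" if i: "i \<in> insert a B" and j: "j \<in> insert a B" for i j
    proof (cases "i = a \<or> j = a")
      case True
      have "A i a = cnj (A a i)" using insert.prems(1) i unfolding herm_def by blast
      then have "A i a = cnj (u i) * u a" using row[OF i] by (simp add: mult.commute)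
      then show ?thesis using True row[OF j] unfolding gram_L by auto
    next
      case False
      with i j have "A i j - cnj (u i) * u j = gram B L' i j" using L' by blast
      then show ?thesis using False unfolding gram_L by (simp add: algebra_simps)
    qed
    then show ?case by blast
  qed
  then show thesis using that by auto
qed

lemma qf_gram:
  assumes "finite R"
  shows "qf B (gram R G) v = (\<Sum>r\<in>R. complex_of_real ((cmod (\<Sum>y\<in>B. G r y * v y))^2))"
proof -
  have "qf B (gram R G) v = (\<Sum>x\<in>B. \<Sum>y\<in>B. \<Sum>r\<in>R. cnj (G r x * v x) * (G r y * v y))"
    unfolding qf_def gram_def by (simp add: sum_distrib_left sum_distrib_right ac_simps)
  also have "\<dots> = (\<Sum>r\<in>R. \<Sum>x\<in>B. \<Sum>y\<in>B. cnj (G r x * v x) * (G r y * v y))"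
    by (simp add: sum.swap[of _ R])
  also have "\<dots> = (\<Sum>r\<in>R. cnj (\<Sum>y\<in>B. G r y * v y) * (\<Sum>y\<in>B. G r y * v y))"
    by (simp add: cnj_sum sum_product)
  finally show ?thesis by (simp only: cnj_mult_self)
qed

lemma psd_gram: "finite R \<Longrightarrow> psd B (gram R G)"
  unfolding psd_def qf_gram by (simp add: sum_nonneg flip: of_real_sum)

lemma herm_gram: "herm B (gram R G)"
  unfolding herm_def gram_def by (simp add: cnj_sum mult.commute)

lemma gram_diag: "gram R G x x = complex_of_real (\<Sum>r\<in>R. (cmod (G r x))^2)"
  unfolding gram_def by (simp add: cnj_mult_self)

lemma norm_gram_le: "cmod (gram R G x y) \<le> sqrt (Re (gram R G x x) * Re (gram R G y y))"
proof -
  have "cmod (gram R G x y) \<le> vnorm R (\<lambda>r. cnj (G r x)) * vnorm R (\<lambda>r. G r y)"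
    unfolding gram_def by (rule norm_sum_mult_le_vnorm)
  then show ?thesis
    unfolding gram_diag vnorm_cnj by (simp add: vnorm_def real_sqrt_mult)
qed

lemma density_gram:
  assumes "finite B" "density B A"
  obtains L where "\<And>i j. i \<in> B \<Longrightarrow> j \<in> B \<Longrightarrow> A i j = gram B L i j"
  using gram_factorization assms unfolding density_iff by blast

lemma density_diag:
  assumes "density B A" "x \<in> B"
  shows "A x x = complex_of_real (Re (A x x))"
  using assms(1) herm_diag[OF _ assms(2)] unfolding density_iff by blast

lemma density_cnj:
  assumes "density B A" "x \<in> B" "y \<in> B"
  shows "A y x = cnj (A x y)"
  using assms unfolding density_iff herm_def by blast

lemma density_diag_nonneg:
  assumes "finite B" "density B A" "x \<in> B"
  shows "Re (A x x) \<ge> 0"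
  using assms(2) psd_diag_nonneg[OF assms(1) _ assms(3)] unfolding density_iff by blast

lemma density_trace_Re:
  assumes "density B A"
  shows "(\<Sum>x\<in>B. Re (A x x)) = 1"
proof -
  have "(\<Sum>x\<in>B. A x x) = 1" using assms unfolding density_iff mtrace_def by blast
  then have "Re (\<Sum>x\<in>B. A x x) = 1" by simp
  then show ?thesis by (simp only: Re_sum)
qed

lemma norm_density_le:
  assumes "finite B" "density B A" "x \<in> B" "y \<in> B"
  shows "cmod (A x y) \<le> sqrt (Re (A x x) * Re (A y y))"
proof -
  obtain L where L: "\<And>i j. i \<in> B \<Longrightarrow> j \<in> B \<Longrightarrow> A i j = gram B L i j"
    using density_gram[OF assms(1,2)] by blast
  show ?thesis using norm_gram_le[of B L x y] unfolding L[OF assms(3,4)] L[OF assms(3,3)] L[OF assms(4,4)] .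
qed

section \<open>Tensor powers\<close>

lemma finite_tuples: "finite (tuples d n)"
  using finite_lists_length_eq[of "{0..<d}" n] unfolding tuples_def by (simp add: conj_commute)

lemma tuples_nth: "xs \<in> tuples d n \<Longrightarrow> i < n \<Longrightarrow> xs ! i < d"
  unfolding tuples_def using nth_mem by fastforce

lemma sum_tuples_Suc:
  "(\<Sum>ys\<in>tuples d (Suc n). g ys) = (\<Sum>a<d. \<Sum>xs\<in>tuples d n. g (a # xs))"
proof -
  have tuples_Suc: "tuples d (Suc n) = (\<lambda>(a, xs). a # xs) ` ({..<d} \<times> tuples d n)"
    unfolding tuples_def by (auto simp: image_iff length_Suc_conv)
  have "inj_on (\<lambda>(a, xs). a # xs) ({..<d} \<times> tuples d n)"
    by (auto simp: inj_on_def)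
  then have "(\<Sum>ys\<in>tuples d (Suc n). g ys) = (\<Sum>p\<in>{..<d} \<times> tuples d n. g (fst p # snd p))"
    unfolding tuples_Suc by (subst sum.reindex) (simp_all add: case_prod_beta)
  then show ?thesis by (simp add: sum.cartesian_product case_prod_beta)
qed

lemma prod_sum_eq_sum_tuples:
  fixes f :: "nat \<Rightarrow> nat \<Rightarrow> 'a::comm_semiring_1"
  shows "(\<Prod>i<n. \<Sum>a<d. f i a) = (\<Sum>xs\<in>tuples d n. \<Prod>i<n. f i (xs ! i))"
proof (induction n arbitrary: f)
  case 0
  have "tuples d 0 = {[]}" unfolding tuples_def by auto
  then show ?case by simp
next
  case (Suc n)
  have "(\<Prod>i<Suc n. \<Sum>a<d. f i a) = (\<Sum>a<d. f 0 a) * (\<Prod>i<n. \<Sum>a<d. f (Suc i) a)"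
    by (rule prod.lessThan_Suc_shift)
  also have "\<dots> = (\<Sum>a<d. f 0 a) * (\<Sum>xs\<in>tuples d n. \<Prod>i<n. f (Suc i) (xs ! i))"
    using Suc.IH[of "\<lambda>i. f (Suc i)"] by simp
  also have "\<dots> = (\<Sum>a<d. \<Sum>xs\<in>tuples d n. f 0 a * (\<Prod>i<n. f (Suc i) (xs ! i)))"
    by (simp add: sum_product)
  also have "\<dots> = (\<Sum>a<d. \<Sum>xs\<in>tuples d n. \<Prod>i<Suc n. f i ((a # xs) ! i))"
    by (simp only: prod.lessThan_Suc_shift nth_Cons_0 nth_Cons_Suc)
  also have "\<dots> = (\<Sum>ys\<in>tuples d (Suc n). \<Prod>i<Suc n. f i (ys ! i))"
    by (rule sum_tuples_Suc[symmetric])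
  finally show ?case .
qed

lemma tensor_pow_gram:
  assumes "\<And>a b. a < d \<Longrightarrow> b < d \<Longrightarrow> \<rho> a b = gram {..<d} L a b"
    and "xs \<in> tuples d n" "ys \<in> tuples d n"
  shows "tensor_pow n \<rho> xs ys = gram (tuples d n) (\<lambda>rs zs. \<Prod>i<n. L (rs ! i) (zs ! i)) xs ys"
proof -
  have "tensor_pow n \<rho> xs ys = (\<Prod>i<n. \<Sum>r<d. cnj (L r (xs ! i)) * L r (ys ! i))"
    unfolding tensor_pow_def using assms tuples_nth by (auto simp: gram_def intro!: prod.cong)
  also have "\<dots> = gram (tuples d n) (\<lambda>rs zs. \<Prod>i<n. L (rs ! i) (zs ! i)) xs ys"
    unfolding prod_sum_eq_sum_tuples gram_def by (simp add: prod.distrib cnj_prod)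
  finally show ?thesis .
qed

lemma tensor_pow_diag:
  assumes "density {0..<d} \<rho>" "xs \<in> tuples d n"
  shows "tensor_pow n \<rho> xs xs = complex_of_real (delta_pow n \<rho> xs)"
proof -
  have "\<rho> (xs ! i) (xs ! i) = complex_of_real (delta \<rho> (xs ! i))" if "i < n" for i
    unfolding delta_def using density_diag[OF assms(1)] tuples_nth[OF assms(2) that] by simp
  then show ?thesis unfolding tensor_pow_def delta_pow_def by simp
qed

lemma Re_tensor_pow_diag:
  assumes "density {0..<d} \<rho>" "xs \<in> tuples d n"
  shows "Re (tensor_pow n \<rho> xs xs) = delta_pow n \<rho> xs"
  using tensor_pow_diag[OF assms] by simp

lemma sum_delta_pow:
  assumes "density {0..<d} \<rho>"
  shows "(\<Sum>xs\<in>tuples d n. delta_pow n \<rho> xs) = 1"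
  using density_trace_Re[OF assms] prod_sum_eq_sum_tuples[of "\<lambda>_. delta \<rho>" d n]
  by (simp add: delta_def delta_pow_def atLeast0LessThan)

lemma delta_pow_nonneg:
  assumes "density {0..<d} \<rho>" "xs \<in> tuples d n"
  shows "delta_pow n \<rho> xs \<ge> 0"
  unfolding delta_pow_def delta_def using density_diag_nonneg[OF _ assms(1)] tuples_nth[OF assms(2)]
  by (intro prod_nonneg) auto

lemma density_tensor_pow:
  assumes dens: "density {0..<d} \<rho>"
  shows "density (tuples d n) (tensor_pow n \<rho>)"
proof -
  obtain L where L: "\<And>a b. a \<in> {0..<d} \<Longrightarrow> b \<in> {0..<d} \<Longrightarrow> \<rho> a b = gram {0..<d} L a b"
    using density_gram[OF _ dens] by blast
  define G where "G rs zs = (\<Prod>i<n. L (rs ! i) (zs ! i))" for rs zs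
  have gram: "tensor_pow n \<rho> xs ys = gram (tuples d n) G xs ys"
    if "xs \<in> tuples d n" "ys \<in> tuples d n" for xs ys
    unfolding G_def using L that by (intro tensor_pow_gram) (auto simp: atLeast0LessThan)
  have "herm (tuples d n) (tensor_pow n \<rho>)"
    by (subst herm_cong[OF gram]) (auto intro: herm_gram)
  moreover have "psd (tuples d n) (tensor_pow n \<rho>)"
    by (subst psd_cong[OF gram]) (auto intro: psd_gram finite_tuples)
  moreover have "mtrace (tuples d n) (tensor_pow n \<rho>) = 1"
    unfolding mtrace_def using tensor_pow_diag[OF dens] sum_delta_pow[OF dens]
    by (simp flip: of_real_sum)
  ultimately show ?thesis unfolding density_iff by blast
qed

section \<open>Entries of the matrix \<open>R\<close>\<close>

lemma Rmat_neq_0D: "Rmat M x y \<noteq> 0 \<Longrightarrow> Re (M x x) > 0 \<and> Re (M y y) > 0"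
  unfolding Rmat_def by (auto split: if_splits)

lemma norm_Rmat_le_1:
  assumes "finite B" "density B M" "x \<in> B" "y \<in> B"
  shows "cmod (Rmat M x y) \<le> 1"
  using norm_density_le[OF assms]
  by (auto simp: Rmat_def norm_divide divide_le_eq_1)

lemma real_sqrt_prod: "sqrt (\<Prod>i\<in>A. f i) = (\<Prod>i\<in>A. sqrt (f i))"
  by (induction A rule: infinite_finite_induct) (auto simp: real_sqrt_mult)

lemma Rmat_tensor_pow:
  assumes dens: "density {0..<d} \<rho>" and xs: "xs \<in> tuples d n" and ys: "ys \<in> tuples d n"
  shows "Rmat (tensor_pow n \<rho>) xs ys = (\<Prod>i<n. Rmat \<rho> (xs ! i) (ys ! i))"
proof -
  have diag: "Re (tensor_pow n \<rho> zs zs) = (\<Prod>i<n. Re (\<rho> (zs ! i) (zs ! i)))" if "zs \<in> tuples d n" for zs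
    unfolding tensor_pow_diag[OF dens that] Re_complex_of_real delta_pow_def delta_def ..
  have nonneg: "Re (\<rho> (zs ! i) (zs ! i)) \<ge> 0" if "zs \<in> tuples d n" "i < n" for zs i
    using density_diag_nonneg[OF _ dens] tuples_nth[OF that] by simp
  show ?thesis
  proof (cases "\<forall>i<n. Re (\<rho> (xs ! i) (xs ! i)) > 0 \<and> Re (\<rho> (ys ! i) (ys ! i)) > 0")
    case True
    then have "Re (tensor_pow n \<rho> xs xs) > 0" "Re (tensor_pow n \<rho> ys ys) > 0"
      unfolding diag[OF xs] diag[OF ys] by (auto intro: prod_pos)
    then have "Rmat (tensor_pow n \<rho>) xs ys = tensor_pow n \<rho> xs ys
        / complex_of_real (sqrt (Re (tensor_pow n \<rho> xs xs) * Re (tensor_pow n \<rho> ys ys)))"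
      by (simp add: Rmat_def)
    also have "\<dots> = (\<Prod>i<n. \<rho> (xs ! i) (ys ! i))
        / (\<Prod>i<n. complex_of_real (sqrt (Re (\<rho> (xs ! i) (xs ! i)) * Re (\<rho> (ys ! i) (ys ! i)))))"
      unfolding diag[OF xs] diag[OF ys] unfolding tensor_pow_def
      by (simp only: real_sqrt_prod of_real_prod flip: prod.distrib)
    also have "\<dots> = (\<Prod>i<n. Rmat \<rho> (xs ! i) (ys ! i))"
      using True by (simp add: Rmat_def prod_dividef)
    finally show ?thesis .
  next
    case False
    then obtain i where i: "i < n" and "\<not> (Re (\<rho> (xs ! i) (xs ! i)) > 0 \<and> Re (\<rho> (ys ! i) (ys ! i)) > 0)"
      by blast
    then have "Re (\<rho> (xs ! i) (xs ! i)) = 0 \<or> Re (\<rho> (ys ! i) (ys ! i)) = 0"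
      using nonneg[OF xs i] nonneg[OF ys i] by linarith
    then have "Re (tensor_pow n \<rho> xs xs) = 0 \<or> Re (tensor_pow n \<rho> ys ys) = 0"
      unfolding diag[OF xs] diag[OF ys] using i by (auto intro: prod_zero)
    then have "Rmat (tensor_pow n \<rho>) xs ys = 0" unfolding Rmat_def by auto
    moreover have "Rmat \<rho> (xs ! i) (ys ! i) = 0"
      using \<open>\<not> (_ \<and> _)\<close> unfolding Rmat_def by auto
    then have "(\<Prod>i<n. Rmat \<rho> (xs ! i) (ys ! i)) = 0"
      using i by (intro prod_zero) auto
    ultimately show ?thesis by simp
  qed
qed

lemma le_lam:
  assumes "i < j" "j < d" "cmod (Rmat \<rho> i j) < 1"
  shows "cmod (Rmat \<rho> i j) \<le> lam d \<rho>"
proof -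
  define S where "S = {cmod (Rmat \<rho> i j) | i j. i < j \<and> j < d \<and> cmod (Rmat \<rho> i j) < 1}"
  have "S \<subseteq> (\<lambda>(i, j). cmod (Rmat \<rho> i j)) ` ({..<d} \<times> {..<d})"
    unfolding S_def by auto
  then have "finite S" by (rule finite_subset) simp
  moreover have "cmod (Rmat \<rho> i j) \<in> S" unfolding S_def using assms by blast
  ultimately show ?thesis unfolding lam_def S_def[symmetric] Let_def by auto
qed

lemma lam_nonneg: "lam d \<rho> \<ge> 0"
proof (cases "\<exists>i j. i < j \<and> j < d \<and> cmod (Rmat \<rho> i j) < 1")
  case True
  then obtain i j where "i < j" "j < d" "cmod (Rmat \<rho> i j) < 1" by blast
  then show ?thesis using le_lam[of i j d \<rho>] norm_ge_zero order_trans by blast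
next
  case False
  then show ?thesis unfolding lam_def Let_def by auto
qed

lemma Scomp_eq_if_gedge:
  assumes "(a, b) \<in> gedge d \<rho>"
  shows "Scomp d \<rho> a = Scomp d \<rho> b"
proof -
  let ?E = "gedge d \<rho> \<union> (gedge d \<rho>)\<inverse>"
  have "(a, b) \<in> ?E" "(b, a) \<in> ?E" using assms by auto
  then show ?thesis
    unfolding Scomp_def by (blast intro: converse_rtrancl_into_rtrancl)
qed

text \<open>Off the diagonal, \<open>|R\<^sub>a\<^sub>b| = 1\<close> exactly on the edges of \<open>G\<^sub>\<rho>\<close>; across components it is
  therefore \<open>< 1\<close>, hence one of the values over which \<open>\<lambda>(\<rho>)\<close> is the maximum.\<close>

lemma norm_Rmat_le_lam:
  assumes dens: "density {0..<d} \<rho>" and a: "a < d" and b: "b < d"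
    and comp: "Scomp d \<rho> a \<noteq> Scomp d \<rho> b"
  shows "cmod (Rmat \<rho> a b) \<le> lam d \<rho>"
proof (cases "Rmat \<rho> a b = 0")
  case True
  then show ?thesis using lam_nonneg by simp
next
  case False
  have pos: "Re (\<rho> a a) > 0" "Re (\<rho> b b) > 0" using Rmat_neq_0D[OF False] by auto
  then have norm_R: "cmod (Rmat \<rho> a b) = cmod (\<rho> a b) / sqrt (Re (\<rho> a a) * Re (\<rho> b b))"
    unfolding Rmat_def by (simp add: norm_divide)
  have "a \<noteq> b" using comp by auto
  then have "cmod (\<rho> a b) \<noteq> sqrt (Re (\<rho> a a) * Re (\<rho> b b))"
    using Scomp_eq_if_gedge[of a b d \<rho>] comp a b pos unfolding gedge_def by auto
  moreover have "cmod (\<rho> a b) \<le> sqrt (Re (\<rho> a a) * Re (\<rho> b b))"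
    using norm_density_le[OF _ dens] a b by simp
  ultimately have lt1: "cmod (Rmat \<rho> a b) < 1"
    unfolding norm_R using pos by (simp add: divide_less_eq_1)
  have "\<rho> b a = cnj (\<rho> a b)" using density_cnj[OF dens, of a b] a b by simp
  then have "cmod (Rmat \<rho> b a) = cmod (Rmat \<rho> a b)"
    unfolding norm_R using pos by (simp add: Rmat_def norm_divide mult.commute)
  then show ?thesis
    using le_lam[of a b d \<rho>] le_lam[of b a d \<rho>] lt1 a b \<open>a \<noteq> b\<close> by (cases "a < b") auto
qed

lemma prod_le_factor:
  fixes c :: "nat \<Rightarrow> real"
  assumes "\<And>i. i < n \<Longrightarrow> 0 \<le> c i" "\<And>i. i < n \<Longrightarrow> c i \<le> 1" "j < n"
  shows "(\<Prod>i<n. c i) \<le> c j"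
proof -
  have "(\<Prod>i<n. c i) = c j * (\<Prod>i\<in>{..<n} - {j}. c i)"
    using assms(3) by (subst prod.remove[of _ j]) auto
  also have "\<dots> \<le> c j"
    using assms by (intro mult_left_le prod_le_1 prod_nonneg) auto
  finally show ?thesis .
qed

lemma norm_Rmat_tensor_pow_le:
  assumes dens: "density {0..<d} \<rho>" and xs: "xs \<in> tuples d n" and ys: "ys \<in> tuples d n"
  shows "cmod (Rmat (tensor_pow n \<rho>) xs ys)
    \<le> (if map (Scomp d \<rho>) xs = map (Scomp d \<rho>) ys then 1 else lam d \<rho>)"
proof -
  define c where "c i = cmod (Rmat \<rho> (xs ! i) (ys ! i))" for i
  have norm_eq: "cmod (Rmat (tensor_pow n \<rho>) xs ys) = (\<Prod>i<n. c i)"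
    unfolding Rmat_tensor_pow[OF assms] c_def by (simp add: prod_norm)
  have c1: "c i \<le> 1" if "i < n" for i
    unfolding c_def using norm_Rmat_le_1[OF _ dens] tuples_nth[OF xs that] tuples_nth[OF ys that] by simp
  show ?thesis
  proof (cases "map (Scomp d \<rho>) xs = map (Scomp d \<rho>) ys")
    case True
    have "(\<Prod>i<n. c i) \<le> 1" using c1 by (intro prod_le_1) (auto simp: c_def)
    then show ?thesis unfolding norm_eq using True by simp
  next
    case False
    have "length xs = n" "length ys = n" using xs ys unfolding tuples_def by auto
    then obtain i where i: "i < n" "Scomp d \<rho> (xs ! i) \<noteq> Scomp d \<rho> (ys ! i)"
      using False by (metis list_eq_iff_nth_eq length_map nth_map)
    have "(\<Prod>i<n. c i) \<le> c i" using c1 i(1) by (intro prod_le_factor) (auto simp: c_def)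
    also have "c i \<le> lam d \<rho>"
      unfolding c_def using norm_Rmat_le_lam[OF dens tuples_nth[OF xs i(1)] tuples_nth[OF ys i(1)] i(2)] .
    finally show ?thesis unfolding norm_eq using False by simp
  qed
qed

section \<open>Conditioning a state on a set of basis vectors\<close>

definition cond_state :: "'i set \<Rightarrow> ('i \<Rightarrow> 'i \<Rightarrow> complex) \<Rightarrow> 'i \<Rightarrow> 'i \<Rightarrow> complex" where
  "cond_state I \<omega> x y = proj I \<omega> x y / complex_of_real (\<Sum>z\<in>I. Re (\<omega> z z))"

lemma density_cond_state:
  assumes fin: "finite B" and dens: "density B \<omega>" and I: "I \<subseteq> B"
    and pos: "(\<Sum>z\<in>I. Re (\<omega> z z)) > 0"
  shows "density B (cond_state I \<omega>)"
proof -
  define t where "t = (\<Sum>z\<in>I. Re (\<omega> z z))"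
  have "herm B (cond_state I \<omega>)"
    unfolding herm_def
  proof (intro ballI)
    fix i j assume "i \<in> B" "j \<in> B"
    then have "\<omega> i j = cnj (\<omega> j i)" using density_cnj[OF dens, of j i] by simp
    then show "cond_state I \<omega> i j = cnj (cond_state I \<omega> j i)"
      by (simp add: cond_state_def proj_def)
  qed
  moreover have "psd B (cond_state I \<omega>)"
    unfolding psd_def
  proof
    fix v
    have "qf B (cond_state I \<omega>) v = qf B \<omega> (\<lambda>i. if i \<in> I then v i else 0) / complex_of_real t"
      unfolding qf_def cond_state_def proj_def t_def[symmetric] sum_divide_distrib
      by (intro sum.cong refl) auto
    then show "Re (qf B (cond_state I \<omega>) v) \<ge> 0"
      using dens pos unfolding density_iff psd_def t_def by simp
  qed
  moreover have "(\<Sum>x\<in>I. \<omega> x x) = complex_of_real t"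
    unfolding t_def of_real_sum using I density_diag[OF dens] by (intro sum.cong) auto
  then have "mtrace B (cond_state I \<omega>) = complex_of_real t / complex_of_real t"
    unfolding mtrace_def cond_state_def proj_def t_def[symmetric] sum_divide_distrib[symmetric]
    using fin I by (simp add: sum.inter_restrict[symmetric] Int_absorb1)
  ultimately show ?thesis unfolding density_iff using pos unfolding t_def[symmetric] by simp
qed

lemma Rmat_cond_state:
  assumes "(\<Sum>z\<in>I. Re (\<omega> z z)) > 0"
  shows "Rmat (cond_state I \<omega>) = proj I (Rmat \<omega>)"
proof (intro ext)
  fix x y
  define t where "t = (\<Sum>z\<in>I. Re (\<omega> z z))"
  have t: "t > 0" using assms t_def by simp
  have Re_diag: "Re (cond_state I \<omega> z z) = (if z \<in> I then Re (\<omega> z z) / t else 0)" for z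
    unfolding cond_state_def proj_def t_def by simp
  have "sqrt (Re (\<omega> x x) / t * (Re (\<omega> y y) / t)) = sqrt (Re (\<omega> x x) * Re (\<omega> y y)) / t"
    using t by (simp add: real_sqrt_divide real_sqrt_mult)
  then show "Rmat (cond_state I \<omega>) x y = proj I (Rmat \<omega>) x y"
    unfolding Rmat_def proj_def Re_diag using t
    by (auto simp: cond_state_def proj_def t_def[symmetric] zero_less_divide_iff)
qed

definition ip :: "'i set \<Rightarrow> ('i \<Rightarrow> complex) \<Rightarrow> ('i \<Rightarrow> complex) \<Rightarrow> complex" where
  "ip B a b = (\<Sum>y\<in>B. cnj (a y) * b y)"

lemma norm_ip_mvec_le:
  assumes "finite B" "opnorm B Y \<le> 1"
  shows "cmod (ip B a (mvec B Y b)) \<le> vnorm B a * vnorm B b"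
proof -
  have "cmod (ip B a (mvec B Y b)) \<le> vnorm B a * vnorm B (mvec B Y b)"
    using norm_sum_mult_le_vnorm[where u = "\<lambda>i. cnj (a i)"] unfolding ip_def vnorm_cnj .
  also have "vnorm B (mvec B Y b) \<le> vnorm B b"
    using vnorm_mvec_le[OF assms(1), of Y b] mult_right_mono[OF assms(2) vnorm_nonneg[of B b]] by simp
  finally show ?thesis by (simp add: mult_left_mono vnorm_nonneg)
qed

lemma trace_gram_mult:
  assumes "finite R"
  shows "(\<Sum>x\<in>B. \<Sum>y\<in>B. gram R G x y * Y y x)
     = (\<Sum>r\<in>R. ip B (\<lambda>x. cnj (G r x)) (mvec B Y (\<lambda>x. cnj (G r x))))"
proof -
  have "(\<Sum>x\<in>B. \<Sum>y\<in>B. gram R G x y * Y y x)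
      = (\<Sum>r\<in>R. \<Sum>x\<in>B. \<Sum>y\<in>B. cnj (G r x) * G r y * Y y x)"
    unfolding gram_def by (simp add: sum_distrib_right sum.swap[of _ R])
  also have "\<dots> = (\<Sum>r\<in>R. \<Sum>y\<in>B. \<Sum>x\<in>B. G r y * (Y y x * cnj (G r x)))"
    by (subst sum.swap) (simp add: ac_simps)
  also have "\<dots> = (\<Sum>r\<in>R. ip B (\<lambda>x. cnj (G r x)) (mvec B Y (\<lambda>x. cnj (G r x))))"
    unfolding ip_def mvec_def by (simp add: sum_distrib_left)
  finally show ?thesis .
qed

lemma norm_ip_cond_diff_le:
  assumes fin: "finite B" and Y: "opnorm B Y \<le> 1" and h: "\<And>x. h x = u x + w x"
    and t: "0 < t" "t \<le> 1"
  shows "cmod (ip B u (mvec B Y u) / complex_of_real t - ip B h (mvec B Y h))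
    \<le> (1 / t - 1) * (vnorm B u)^2 + vnorm B u * vnorm B w + vnorm B w * vnorm B h"
proof -
  have c: "cmod (complex_of_real (1 / t - 1)) = 1 / t - 1"
    unfolding norm_of_real using t by simp
  have "mvec B Y h = (\<lambda>y. mvec B Y u y + mvec B Y w y)"
    unfolding mvec_def h by (simp add: algebra_simps sum.distrib)
  then have "ip B u (mvec B Y h) = ip B u (mvec B Y u) + ip B u (mvec B Y w)"
    unfolding ip_def by (simp add: algebra_simps sum.distrib)
  moreover have "ip B h (mvec B Y h) = ip B u (mvec B Y h) + ip B w (mvec B Y h)"
    unfolding ip_def h by (simp add: algebra_simps sum.distrib)
  ultimately have eq: "ip B u (mvec B Y u) / complex_of_real t - ip B h (mvec B Y h)
      = complex_of_real (1 / t - 1) * ip B u (mvec B Y u) - ip B u (mvec B Y w) - ip B w (mvec B Y h)"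
    by (simp add: field_simps)
  have "cmod (ip B u (mvec B Y u) / complex_of_real t - ip B h (mvec B Y h))
      \<le> cmod (complex_of_real (1 / t - 1) * ip B u (mvec B Y u))
      + cmod (ip B u (mvec B Y w)) + cmod (ip B w (mvec B Y h))"
    unfolding eq by (rule order_trans[OF norm_triangle_ineq4 add_right_mono[OF norm_triangle_ineq4]])
  also have "\<dots> = (1 / t - 1) * cmod (ip B u (mvec B Y u))
      + cmod (ip B u (mvec B Y w)) + cmod (ip B w (mvec B Y h))"
    unfolding norm_mult c ..
  also have "\<dots> \<le> (1 / t - 1) * (vnorm B u)^2 + vnorm B u * vnorm B w + vnorm B w * vnorm B h"
    using t norm_ip_mvec_le[OF fin Y]
    by (intro add_mono mult_left_mono) (auto simp: power2_eq_square)
  finally show ?thesis .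
qed

lemma sum_vnorm_restrict_gram:
  assumes fin: "finite B" and diag: "\<And>x. x \<in> B \<Longrightarrow> \<omega> x x = gram R F x x"
  shows "(\<Sum>r\<in>R. (vnorm B (\<lambda>x. if x \<in> J then cnj (F r x) else 0))^2) = (\<Sum>x\<in>B \<inter> J. Re (\<omega> x x))"
proof -
  have "(\<Sum>r\<in>R. (vnorm B (\<lambda>x. if x \<in> J then cnj (F r x) else 0))^2)
      = (\<Sum>r\<in>R. \<Sum>x\<in>B. if x \<in> J then (cmod (F r x))^2 else 0)"
    unfolding vnorm_power2 by (intro sum.cong) auto
  also have "\<dots> = (\<Sum>x\<in>B. if x \<in> J then Re (\<omega> x x) else 0)"
    using diag by (subst sum.swap) (auto simp: gram_diag intro!: sum.cong)
  finally show ?thesis using fin by (simp add: sum.inter_restrict)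
qed

lemma trace_cond_state_diff:
  fixes I :: "'i set" and F :: "'i \<Rightarrow> 'i \<Rightarrow> complex"
  assumes fin: "finite B" and F: "\<And>x y. x \<in> B \<Longrightarrow> y \<in> B \<Longrightarrow> \<omega> x y = gram B F x y"
  defines "u \<equiv> \<lambda>r x. if x \<in> I then cnj (F r x) else 0" and "h \<equiv> \<lambda>r x. cnj (F r x)"
  shows "mtrace B (mmul B (\<lambda>x y. cond_state I \<omega> x y - \<omega> x y) Y)
    = (\<Sum>r\<in>B. ip B (u r) (mvec B Y (u r)) / complex_of_real (\<Sum>z\<in>I. Re (\<omega> z z))
        - ip B (h r) (mvec B Y (h r)))"
proof -
  define t where "t = (\<Sum>z\<in>I. Re (\<omega> z z))"
  define G where "G r x = (if x \<in> I then F r x else 0)" for r x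
  have "cond_state I \<omega> x y - \<omega> x y = gram B G x y / complex_of_real t - gram B F x y"
    if "x \<in> B" "y \<in> B" for x y
    unfolding cond_state_def proj_def t_def using F[OF that] by (auto simp: G_def gram_def)
  then have "mtrace B (mmul B (\<lambda>x y. cond_state I \<omega> x y - \<omega> x y) Y)
      = (\<Sum>x\<in>B. \<Sum>y\<in>B. gram B G x y * Y y x) / complex_of_real t
        - (\<Sum>x\<in>B. \<Sum>y\<in>B. gram B F x y * Y y x)"
    unfolding mtrace_def mmul_def by (simp add: left_diff_distrib sum_subtractf sum_divide_distrib)
  moreover have "(\<lambda>x. cnj (G r x)) = u r" "(\<lambda>x. cnj (F r x)) = h r" for r
    unfolding G_def u_def h_def by auto
  ultimately show ?thesis
    unfolding trace_gram_mult[OF fin] t_def by (simp add: sum_divide_distrib sum_subtractf)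
qed

lemma norm_trace_cond_state_le:
  fixes I :: "'i set" and \<omega> :: "'i \<Rightarrow> 'i \<Rightarrow> complex"
  defines "t \<equiv> \<Sum>z\<in>I. Re (\<omega> z z)"
  assumes fin: "finite B" and dens: "density B \<omega>" and I: "I \<subseteq> B"
    and t: "0 < t" and Y: "opnorm B Y \<le> 1"
  shows "cmod (mtrace B (mmul B (\<lambda>x y. cond_state I \<omega> x y - \<omega> x y) Y))
    \<le> (1 - t) + sqrt (t * (1 - t)) + sqrt (1 - t)"
proof -
  \<comment> \<open>write \<open>\<omega> = \<Sum>\<^sub>r |h\<^sub>r\<rangle>\<langle>h\<^sub>r|\<close> and split each \<open>h\<^sub>r = u\<^sub>r + w\<^sub>r\<close> along \<open>I\<close> and its complement\<close>
  obtain F where F: "\<And>x y. x \<in> B \<Longrightarrow> y \<in> B \<Longrightarrow> \<omega> x y = gram B F x y"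
    using density_gram[OF fin dens] by blast
  define h where "h r x = cnj (F r x)" for r x
  define u where "u r x = (if x \<in> I then cnj (F r x) else 0)" for r x
  define w where "w r x = (if x \<in> - I then cnj (F r x) else 0)" for r x
  have "\<omega> x x = gram B F x x" if "x \<in> B" for x using F[OF that that] .
  note sum_vnorm = sum_vnorm_restrict_gram[where \<omega> = \<omega> and F = F, OF fin this]
  have sum_u: "(\<Sum>r\<in>B. (vnorm B (u r))^2) = t"
    using sum_vnorm[of I] I unfolding u_def t_def by (simp add: Int_absorb1)
  have sum_h: "(\<Sum>r\<in>B. (vnorm B (h r))^2) = 1"
    using sum_vnorm[of UNIV] density_trace_Re[OF dens] unfolding h_def by simp
  have sum_w: "(\<Sum>r\<in>B. (vnorm B (w r))^2) = 1 - t"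
    using sum_vnorm[of "- I"] sum_diff[OF fin I, of "\<lambda>z. Re (\<omega> z z)"] density_trace_Re[OF dens]
    unfolding w_def t_def by (simp add: Diff_eq Int_commute)
  then have t1: "t \<le> 1" using sum_nonneg[of B "\<lambda>r. (vnorm B (w r))^2"] by simp
  have tr: "mtrace B (mmul B (\<lambda>x y. cond_state I \<omega> x y - \<omega> x y) Y)
      = (\<Sum>r\<in>B. ip B (u r) (mvec B Y (u r)) / complex_of_real t - ip B (h r) (mvec B Y (h r)))"
    using trace_cond_state_diff[OF fin F, of I Y] unfolding u_def h_def t_def .
  have "cmod (mtrace B (mmul B (\<lambda>x y. cond_state I \<omega> x y - \<omega> x y) Y))
      \<le> (\<Sum>r\<in>B. (1 / t - 1) * (vnorm B (u r))^2 + vnorm B (u r) * vnorm B (w r)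
           + vnorm B (w r) * vnorm B (h r))"
    unfolding tr
    by (intro order_trans[OF norm_sum] sum_mono norm_ip_cond_diff_le[OF fin Y _ t t1])
      (simp add: u_def w_def h_def)
  also have "\<dots> \<le> (1 / t - 1) * t + sqrt t * sqrt (1 - t) + sqrt (1 - t) * sqrt 1"
    using sum_mult_le_sqrt_sum_power2[of "\<lambda>r. vnorm B (u r)" "\<lambda>r. vnorm B (w r)" B]
      sum_mult_le_sqrt_sum_power2[of "\<lambda>r. vnorm B (w r)" "\<lambda>r. vnorm B (h r)" B]
    unfolding sum.distrib sum_distrib_left[symmetric] sum_u sum_w sum_h by linarith
  also have "\<dots> = (1 - t) + sqrt (t * (1 - t)) + sqrt (1 - t)"
    using t by (simp add: left_diff_distrib real_sqrt_mult)
  finally show ?thesis .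
qed

lemma gentle_sqrt_bound:
  fixes t :: real
  assumes "0 < t" "t \<le> 1"
  shows "(1 - t) + sqrt (t * (1 - t)) + sqrt (1 - t) \<le> sqrt (8 * (1 - t))"
proof -
  define a where "a = sqrt (1 - t)"
  define b where "b = sqrt t"
  have ab: "a \<ge> 0" "b \<ge> 0" "a^2 = 1 - t" "b^2 = t" using assms by (auto simp: a_def b_def)
  have "(a + b)^2 \<le> 2" using sum_squares_bound[of a b] ab by (simp add: power2_sum)
  then have "a + b \<le> sqrt 2" using ab by (simp add: real_le_rsqrt)
  moreover have "1 \<le> sqrt (2::real)" by simp
  ultimately have "a + b + 1 \<le> 2 * sqrt 2" by linarith
  then have "a * (a + b + 1) \<le> a * (2 * sqrt 2)" using ab(1) by (rule mult_left_mono)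
  moreover have "sqrt (8 * (1 - t)) = sqrt 4 * sqrt 2 * a"
    unfolding a_def by (simp only: real_sqrt_mult[symmetric]) simp
  moreover have "sqrt (t * (1 - t)) = b * a" unfolding a_def b_def by (rule real_sqrt_mult)
  then have "(1 - t) + sqrt (t * (1 - t)) + sqrt (1 - t) = a * (a + b + 1)"
    using ab unfolding a_def[symmetric] by (simp add: power2_eq_square algebra_simps)
  ultimately show ?thesis by (simp add: mult.commute)
qed

lemma trnorm_cond_state_le:
  fixes I :: "'i set" and \<omega> :: "'i \<Rightarrow> 'i \<Rightarrow> complex"
  defines "t \<equiv> \<Sum>z\<in>I. Re (\<omega> z z)"
  assumes fin: "finite B" and ne: "B \<noteq> {}" and dens: "density B \<omega>" and I: "I \<subseteq> B"
    and t: "0 < t"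
  shows "trnorm B (\<lambda>x y. cond_state I \<omega> x y - \<omega> x y) \<le> sqrt (8 * (1 - t))"
  unfolding trnorm_def
proof (rule cSup_least)
  have "opnorm B (\<lambda>_ _. 0) \<le> 1"
    using opnorm_le_Schur[OF fin ne, of 0 "\<lambda>_ _. 0"] by simp
  then show "{cmod (mtrace B (mmul B (\<lambda>x y. cond_state I \<omega> x y - \<omega> x y) Y)) | Y. opnorm B Y \<le> 1} \<noteq> {}"
    by blast
  have "t \<le> (\<Sum>z\<in>B. Re (\<omega> z z))"
    unfolding t_def using fin I density_diag_nonneg[OF fin dens] by (intro sum_mono2) auto
  then have "t \<le> 1" using density_trace_Re[OF dens] by simp
  then show "z \<le> sqrt (8 * (1 - t))"
    if "z \<in> {cmod (mtrace B (mmul B (\<lambda>x y. cond_state I \<omega> x y - \<omega> x y) Y)) | Y. opnorm B Y \<le> 1}" for z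
    using that norm_trace_cond_state_le[OF fin dens I t[unfolded t_def]] gentle_sqrt_bound[OF t]
    unfolding t_def by fastforce
qed

section \<open>Conditioned distributions and the smoothed max-entropy\<close>

lemma VsetE:
  assumes fin: "finite \<Omega>" and nonneg: "\<And>x. x \<in> \<Omega> \<Longrightarrow> p x \<ge> 0" and sum1: "(\<Sum>x\<in>\<Omega>. p x) = 1"
    and q: "q \<in> Vset \<Omega> p e"
  obtains I where "I \<subseteq> \<Omega>" "(\<Sum>i\<in>I. p i) > 0"
    "q = (\<lambda>x. if x \<in> I then p x / (\<Sum>i\<in>I. p i) else 0)" "2 * (1 - (\<Sum>i\<in>I. p i)) \<le> e"
proof -
  obtain I where I: "I \<subseteq> \<Omega>" "(\<Sum>i\<in>I. p i) > 0"
    and q_eq: "q = (\<lambda>x. if x \<in> I then p x / (\<Sum>i\<in>I. p i) else 0)"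
    and close: "(\<Sum>x\<in>\<Omega>. \<bar>q x - p x\<bar>) \<le> e"
    using q unfolding Vset_def by blast
  define t where "t = (\<Sum>i\<in>I. p i)"
  have t: "0 < t" "t \<le> 1"
    using I sum1 sum_mono2[OF fin I(1), of p] nonneg unfolding t_def by auto
  \<comment> \<open>rescaling moves mass \<open>1 - t\<close> onto \<open>I\<close> and removes mass \<open>1 - t\<close> from its complement\<close>
  have "(\<Sum>x\<in>\<Omega>. \<bar>q x - p x\<bar>) = (\<Sum>x\<in>I. p x * (1 / t - 1)) + (\<Sum>x\<in>\<Omega> - I. p x)"
  proof -
    have "\<bar>q x - p x\<bar> = (if x \<in> I then p x * (1 / t - 1) else p x)" if x: "x \<in> \<Omega>" for x
    proof (cases "x \<in> I")
      case True
      have "q x - p x = p x * (1 / t - 1)"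
        using True t unfolding q_eq t_def[symmetric] by (simp add: field_simps)
      moreover have "p x * (1 / t - 1) \<ge> 0" using nonneg[OF x] t by simp
      ultimately show ?thesis using True by simp
    qed (use nonneg[OF x] in \<open>simp add: q_eq\<close>)
    then show ?thesis
      using sum.If_cases[OF fin, of "\<lambda>x. x \<in> I" "\<lambda>x. p x * (1 / t - 1)" p] I(1)
      by (simp add: Int_absorb1 Diff_eq)
  qed
  also have "\<dots> = 2 * (1 - t)"
  proof -
    have "(\<Sum>x\<in>I. p x * (1 / t - 1)) = 1 - t"
      unfolding sum_distrib_right[symmetric] t_def[symmetric] using t by (simp add: field_simps)
    moreover have "(\<Sum>x\<in>\<Omega> - I. p x) = 1 - t"
      using sum_diff[OF fin I(1), of p] sum1 unfolding t_def by simp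
    ultimately show ?thesis by simp
  qed
  finally show thesis using that I q_eq close t_def by auto
qed

lemma htilde_attained:
  assumes fin: "finite \<Omega>" and sum1: "(\<Sum>x\<in>\<Omega>. p x) = 1" and e: "e \<ge> 0"
  obtains q where "q \<in> Vset \<Omega> p e" "htilde \<Omega> p Y e = hmax \<Omega> q Y"
proof -
  have "Vset \<Omega> p e \<subseteq> (\<lambda>I x. if x \<in> I then p x / (\<Sum>i\<in>I. p i) else 0) ` Pow \<Omega>"
    unfolding Vset_def by auto
  then have "finite (Vset \<Omega> p e)" by (rule finite_subset) (use fin in simp)
  moreover have "(\<lambda>x. if x \<in> \<Omega> then p x / (\<Sum>i\<in>\<Omega>. p i) else 0) \<in> Vset \<Omega> p e"
    unfolding Vset_def using sum1 e by auto
  ultimately have "htilde \<Omega> p Y e \<in> (\<lambda>q. hmax \<Omega> q Y) ` Vset \<Omega> p e"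
    unfolding htilde_def by (intro Min_in) auto
  then show thesis using that by blast
qed

lemma card_fibre_le_hmax:
  assumes fin: "finite \<Omega>" and x: "x \<in> \<Omega>" "q x > 0"
  shows "real (card {z\<in>\<Omega>. q z > 0 \<and> Y z = Y x}) \<le> 2 powr hmax \<Omega> q Y"
proof -
  define Hs where "Hs = {log 2 (real (card {x\<in>\<Omega>. q x > 0 \<and> Y x = y})) | y. \<exists>x\<in>\<Omega>. q x > 0 \<and> Y x = y}"
  have "Hs \<subseteq> (\<lambda>y. log 2 (real (card {x\<in>\<Omega>. q x > 0 \<and> Y x = y}))) ` (Y ` \<Omega>)"
    unfolding Hs_def by auto
  then have "finite Hs" using fin by (rule finite_subset[OF _ finite_imageI[OF finite_imageI]])
  moreover have "log 2 (real (card {z\<in>\<Omega>. q z > 0 \<and> Y z = Y x})) \<in> Hs"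
    unfolding Hs_def using x by blast
  ultimately have le: "log 2 (real (card {z\<in>\<Omega>. q z > 0 \<and> Y z = Y x})) \<le> hmax \<Omega> q Y"
    unfolding hmax_def Hs_def[symmetric] by (rule Max_ge)
  have "card {z\<in>\<Omega>. q z > 0 \<and> Y z = Y x} > 0"
    using fin x by (auto simp: card_gt_0_iff)
  then show ?thesis
    using powr_mono[OF le, of 2] by simp
qed

lemma htilde_witness:
  assumes fin: "finite \<Omega>" and nonneg: "\<And>x. x \<in> \<Omega> \<Longrightarrow> p x \<ge> 0"
    and sum1: "(\<Sum>x\<in>\<Omega>. p x) = 1" and e: "e \<ge> 0"
  obtains I where "I \<subseteq> \<Omega>" "(\<Sum>i\<in>I. p i) > 0" "2 * (1 - (\<Sum>i\<in>I. p i)) \<le> e"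
    "\<And>x. x \<in> I \<Longrightarrow> p x > 0 \<Longrightarrow> real (card {y\<in>I. p y > 0 \<and> Y y = Y x}) \<le> 2 powr htilde \<Omega> p Y e"
proof -
  obtain q where q: "q \<in> Vset \<Omega> p e" and H: "htilde \<Omega> p Y e = hmax \<Omega> q Y"
    using htilde_attained[OF fin sum1 e] by blast
  obtain I where I: "I \<subseteq> \<Omega>" "(\<Sum>i\<in>I. p i) > 0" "2 * (1 - (\<Sum>i\<in>I. p i)) \<le> e"
    and q_eq: "q = (\<lambda>x. if x \<in> I then p x / (\<Sum>i\<in>I. p i) else 0)"
    using VsetE[OF fin nonneg sum1 q] by blast
  have "real (card {y\<in>I. p y > 0 \<and> Y y = Y x}) \<le> 2 powr htilde \<Omega> p Y e"
    if "x \<in> I" "p x > 0" for x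
  proof -
    have "{z\<in>\<Omega>. q z > 0 \<and> Y z = Y x} = {y\<in>I. p y > 0 \<and> Y y = Y x}"
      using I unfolding q_eq by (auto simp: zero_less_divide_iff)
    moreover have "x \<in> \<Omega>" "q x > 0" using that I unfolding q_eq by auto
    ultimately show ?thesis
      using card_fibre_le_hmax[OF fin, of x q Y] unfolding H by simp
  qed
  with I show thesis using that by blast
qed

section \<open>Bounding \<open>\<mu>\<^sub>k\<close>\<close>

lemma Max_opnorm_proj_Rmat_ge_1:
  assumes fin: "finite B" and dens: "density B \<sigma>" and k: "k \<ge> 1"
  shows "Max {opnorm B (proj I (Rmat \<sigma>)) | I. I \<subseteq> B \<and> card I \<le> k} \<ge> 1"
proof -
  have "\<exists>x\<in>B. Re (\<sigma> x x) > 0"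
  proof (rule ccontr)
    assume "\<not> ?thesis"
    then have "(\<Sum>x\<in>B. Re (\<sigma> x x)) \<le> 0" by (intro sum_nonpos) auto
    then show False using density_trace_Re[OF dens] by simp
  qed
  then obtain x where x: "x \<in> B" "Re (\<sigma> x x) > 0" by blast
  define e where "e = (\<lambda>i. if i = x then (1::complex) else 0)"
  define r where "r = Re (\<sigma> x x)"
  have "\<sigma> x x = complex_of_real r" unfolding r_def by (rule density_diag[OF dens x(1)])
  then have "Rmat \<sigma> x x = 1"
    using x(2) unfolding Rmat_def r_def[symmetric] by simp
  then have "mvec B (proj {x} (Rmat \<sigma>)) e i = (\<Sum>j\<in>B. if j = x then e i else 0)" for i
    unfolding mvec_def proj_def e_def by (intro sum.cong) auto
  then have "mvec B (proj {x} (Rmat \<sigma>)) e = e"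
    using x(1) fin by auto
  then have "1 \<le> opnorm B (proj {x} (Rmat \<sigma>))"
    using vnorm_mvec_le_opnorm[OF fin vnorm_unit[OF fin x(1)], where M = "proj {x} (Rmat \<sigma>)"]
      vnorm_unit[OF fin x(1)] unfolding e_def by simp
  also have "\<dots> \<le> Max {opnorm B (proj I (Rmat \<sigma>)) | I. I \<subseteq> B \<and> card I \<le> k}"
    using fin x(1) k by (intro Max_ge) auto
  finally show ?thesis .
qed

lemma mu_nonneg:
  assumes "finite B" "density B \<sigma>" "k \<ge> 1"
  shows "mu k B \<sigma> \<ge> 0"
  unfolding mu_def using Max_opnorm_proj_Rmat_ge_1[OF assms] by simp

lemma mu_eps_le_mu:
  assumes "finite B" "k \<ge> 1" "density B \<sigma>" "trnorm B (\<lambda>i j. \<sigma> i j - \<omega> i j) \<le> \<epsilon>"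
  shows "mu_eps k \<epsilon> B \<omega> \<le> mu k B \<sigma>"
  unfolding mu_eps_def
proof (rule cInf_lower)
  show "mu k B \<sigma> \<in> {mu k B \<sigma>' | \<sigma>'. density B \<sigma>' \<and> trnorm B (\<lambda>i j. \<sigma>' i j - \<omega> i j) \<le> \<epsilon>}"
    using assms(3,4) by blast
  show "bdd_below {mu k B \<sigma>' | \<sigma>'. density B \<sigma>' \<and> trnorm B (\<lambda>i j. \<sigma>' i j - \<omega> i j) \<le> \<epsilon>}"
    using mu_nonneg[OF assms(1) _ assms(2)] by (intro bdd_belowI[where m = 0]) auto
qed

lemma mu_le:
  assumes fin: "finite B" and dens: "density B \<sigma>" and k: "k \<ge> 1"
    and bound: "\<And>K. K \<subseteq> B \<Longrightarrow> card K \<le> k \<Longrightarrow> opnorm B (proj K (Rmat \<sigma>)) \<le> r"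
  shows "mu k B \<sigma> \<le> log 2 r"
proof -
  have "finite {opnorm B (proj K (Rmat \<sigma>)) | K. K \<subseteq> B \<and> card K \<le> k}"
    using fin by (auto intro: finite_subset[of _ "(\<lambda>K. opnorm B (proj K (Rmat \<sigma>))) ` Pow B"])
  then have "Max {opnorm B (proj K (Rmat \<sigma>)) | K. K \<subseteq> B \<and> card K \<le> k} \<le> r"
    using bound by (intro Max.boundedI) auto
  then show ?thesis
    unfolding mu_def using Max_opnorm_proj_Rmat_ge_1[OF fin dens k] by simp
qed

lemma opnorm_proj_le:
  assumes fin: "finite B" and ne: "B \<noteq> {}" and K: "K \<subseteq> B" and C: "C \<subseteq> B"
    and c: "c \<ge> 0" and N: "N \<ge> 0"
    and entry: "\<And>x y. x \<in> B \<Longrightarrow> y \<in> B \<Longrightarrow> cmod (M x y) \<le> (if x \<in> C \<and> y \<in> C \<and> Y x = Y y then 1 else c)"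
    and fibre: "\<And>x. x \<in> C \<Longrightarrow> real (card {y\<in>C. Y y = Y x}) \<le> N"
  shows "opnorm B (proj K M) \<le> N + c * real (card K)"
proof -
  define \<beta> where "\<beta> x y = (if x \<in> C \<and> y \<in> C \<and> Y x = Y y then 1 else (0::real)) + (if y \<in> K then c else 0)" for x y
  have le_\<beta>: "cmod (proj K M x y) \<le> \<beta> x y" "cmod (proj K M x y) \<le> \<beta> y x" if "x \<in> B" "y \<in> B" for x y
    using entry[OF that] c unfolding proj_def \<beta>_def by auto
  have row: "(\<Sum>y\<in>B. \<beta> x y) \<le> N + c * real (card K)" for x
  proof -
    have "(\<Sum>y\<in>B. if x \<in> C \<and> y \<in> C \<and> Y x = Y y then 1 else (0::real)) \<le> N"
    proof (cases "x \<in> C")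
      case True
      have "{y\<in>B. y \<in> C \<and> Y y = Y x} = {y\<in>C. Y y = Y x}" using C by auto
      then have "(\<Sum>y\<in>B. if x \<in> C \<and> y \<in> C \<and> Y x = Y y then 1 else (0::real)) = card {y\<in>C. Y y = Y x}"
        using True fin by (simp add: sum.If_cases Int_def conj_commute eq_commute)
      then show ?thesis using fibre[OF True] by simp
    qed (simp add: N)
    moreover have "(\<Sum>y\<in>B. if y \<in> K then c else 0) = c * real (card K)"
      using fin K by (simp add: sum.If_cases Int_absorb1)
    ultimately show ?thesis unfolding \<beta>_def sum.distrib by linarith
  qed
  show ?thesis
  proof (rule opnorm_le_Schur[OF fin ne])
    show "0 \<le> N + c * real (card K)" using c N by simp
    show "(\<Sum>y\<in>B. cmod (proj K M x y)) \<le> N + c * real (card K)" if "x \<in> B" for x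
      using le_\<beta>(1)[OF that] row[of x] by (meson order_trans sum_mono)
    show "(\<Sum>x\<in>B. cmod (proj K M x y)) \<le> N + c * real (card K)" if "y \<in> B" for y
      using le_\<beta>(2)[OF _ that] row[of y] by (meson order_trans sum_mono)
  qed
qed

section \<open>The bound for tensor powers\<close>

lemma sum_Re_tensor_pow_diag:
  assumes "density {0..<d} \<rho>" "I \<subseteq> tuples d n"
  shows "(\<Sum>x\<in>I. Re (tensor_pow n \<rho> x x)) = (\<Sum>x\<in>I. delta_pow n \<rho> x)"
  using assms Re_tensor_pow_diag by (auto intro!: sum.cong)

lemma density_cond_tensor_pow:
  assumes dens: "density {0..<d} \<rho>" and I: "I \<subseteq> tuples d n" and t: "0 < (\<Sum>x\<in>I. delta_pow n \<rho> x)"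
  shows "density (tuples d n) (cond_state I (tensor_pow n \<rho>))"
  using density_cond_state[OF finite_tuples density_tensor_pow[OF dens] I] t
  unfolding sum_Re_tensor_pow_diag[OF dens I] .

lemma norm_Rmat_cond_tensor_pow_le:
  assumes dens: "density {0..<d} \<rho>" and I: "I \<subseteq> tuples d n"
    and t: "0 < (\<Sum>x\<in>I. delta_pow n \<rho> x)" and xy: "x \<in> tuples d n" "y \<in> tuples d n"
  shows "cmod (Rmat (cond_state I (tensor_pow n \<rho>)) x y)
    \<le> (if x \<in> I \<and> delta_pow n \<rho> x > 0 \<and> y \<in> I \<and> delta_pow n \<rho> y > 0
          \<and> map (Scomp d \<rho>) x = map (Scomp d \<rho>) y then 1 else lam d \<rho>)"
proof -
  have R: "Rmat (cond_state I (tensor_pow n \<rho>)) = proj I (Rmat (tensor_pow n \<rho>))"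
    using Rmat_cond_state[where I = I and \<omega> = "tensor_pow n \<rho>"] t
    unfolding sum_Re_tensor_pow_diag[OF dens I] by blast
  show ?thesis
  proof (cases "x \<in> I \<and> y \<in> I \<and> Rmat (tensor_pow n \<rho>) x y \<noteq> 0")
    case True
    then have "delta_pow n \<rho> x > 0" "delta_pow n \<rho> y > 0"
      using Rmat_neq_0D Re_tensor_pow_diag[OF dens] xy by metis+
    then show ?thesis
      using norm_Rmat_tensor_pow_le[OF dens xy] True unfolding R by (simp add: proj_def)
  next
    case False
    then show ?thesis using lam_nonneg unfolding R by (auto simp: proj_def)
  qed
qed

lemma mu_cond_tensor_pow_le:
  assumes dens: "density {0..<d} \<rho>" and lam: "lam d \<rho> > 0" and k: "k \<ge> 1"
    and I: "I \<subseteq> tuples d n" and t: "0 < (\<Sum>x\<in>I. delta_pow n \<rho> x)"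
    and fibre: "\<And>x. x \<in> I \<Longrightarrow> delta_pow n \<rho> x > 0 \<Longrightarrow>
      real (card {y\<in>I. delta_pow n \<rho> y > 0 \<and> map (Scomp d \<rho>) y = map (Scomp d \<rho>) x}) \<le> N"
  shows "mu k (tuples d n) (cond_state I (tensor_pow n \<rho>)) \<le> log 2 (N + real k * lam d \<rho>)"
proof (rule mu_le[OF finite_tuples density_cond_tensor_pow[OF dens I t] k])
  define C where "C = {x\<in>I. delta_pow n \<rho> x > 0}"
  have fibre_C: "real (card {y\<in>C. map (Scomp d \<rho>) y = map (Scomp d \<rho>) x}) \<le> N" if "x \<in> C" for x
    using fibre[of x] that unfolding C_def by (simp add: conj_assoc)
  obtain x0 where "x0 \<in> C"
    using t unfolding C_def by (metis (no_types, lifting) mem_Collect_eq not_le sum_nonpos)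
  then have N: "N \<ge> 0" using fibre_C[of x0] by linarith
  have C: "C \<subseteq> tuples d n" using I unfolding C_def by auto
  have ne: "tuples d n \<noteq> {}" using C \<open>x0 \<in> C\<close> by auto
  have entry: "cmod (Rmat (cond_state I (tensor_pow n \<rho>)) x y)
      \<le> (if x \<in> C \<and> y \<in> C \<and> map (Scomp d \<rho>) x = map (Scomp d \<rho>) y then 1 else lam d \<rho>)"
    if "x \<in> tuples d n" "y \<in> tuples d n" for x y
    using norm_Rmat_cond_tensor_pow_le[OF dens I t that] unfolding C_def by (simp add: conj_ac)
  fix K assume K: "K \<subseteq> tuples d n" "card K \<le> k"
  have "opnorm (tuples d n) (proj K (Rmat (cond_state I (tensor_pow n \<rho>))))
      \<le> N + lam d \<rho> * real (card K)"
    by (rule opnorm_proj_le[OF finite_tuples ne K(1) C less_imp_le[OF lam] N entry fibre_C])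
  also have "\<dots> \<le> N + real k * lam d \<rho>"
    using K(2) lam by (simp add: mult.commute)
  finally show "opnorm (tuples d n) (proj K (Rmat (cond_state I (tensor_pow n \<rho>))))
      \<le> N + real k * lam d \<rho>" .
qed

lemma mu_eps_tensor_pow_le:
  fixes \<rho> :: "nat \<Rightarrow> nat \<Rightarrow> complex" and I :: "nat list set" and n :: nat
  defines "t \<equiv> \<Sum>x\<in>I. delta_pow n \<rho> x"
  assumes dens: "density {0..<d} \<rho>" and lam: "lam d \<rho> > 0" and k: "k \<ge> 1"
    and I: "I \<subseteq> tuples d n" and t: "0 < t" and close: "8 * (1 - t) \<le> \<epsilon>^2" and \<epsilon>: "\<epsilon> \<ge> 0"
    and fibre: "\<And>x. x \<in> I \<Longrightarrow> delta_pow n \<rho> x > 0 \<Longrightarrow>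
      real (card {y\<in>I. delta_pow n \<rho> y > 0 \<and> map (Scomp d \<rho>) y = map (Scomp d \<rho>) x}) \<le> N"
  shows "mu_eps k \<epsilon> (tuples d n) (tensor_pow n \<rho>) \<le> log 2 (N + real k * lam d \<rho>)"
proof -
  have ne: "tuples d n \<noteq> {}" using I t unfolding t_def by auto
  have "trnorm (tuples d n) (\<lambda>x y. cond_state I (tensor_pow n \<rho>) x y - tensor_pow n \<rho> x y)
      \<le> sqrt (8 * (1 - t))"
    using trnorm_cond_state_le[OF finite_tuples ne density_tensor_pow[OF dens] I] t
    unfolding sum_Re_tensor_pow_diag[OF dens I] t_def .
  also have "\<dots> \<le> \<epsilon>" using \<epsilon> real_sqrt_le_mono[OF close] by simp
  finally have "mu_eps k \<epsilon> (tuples d n) (tensor_pow n \<rho>) \<le> mu k (tuples d n) (cond_state I (tensor_pow n \<rho>))"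
    by (rule mu_eps_le_mu[OF finite_tuples k density_cond_tensor_pow[OF dens I t[unfolded t_def]]])
  also have "\<dots> \<le> log 2 (N + real k * lam d \<rho>)"
    by (rule mu_cond_tensor_pow_le[OF dens lam k I t[unfolded t_def] fibre])
  finally show ?thesis .
qed

theorem proposition2:
  fixes \<rho> :: "nat \<Rightarrow> nat \<Rightarrow> complex" and d n k :: nat and \<epsilon> :: real
  assumes "density {0..<d} \<rho>" and "lam d \<rho> > 0"
    and "\<epsilon> > 0" and "n \<ge> 1" and "k \<ge> 1"
  shows "mu_eps k \<epsilon> (tuples d n) (tensor_pow n \<rho>)
     \<le> log 2 (real k) + log 2 (lam d \<rho>)
        + log 2 (1 + 2 powr (htilde (tuples d n) (delta_pow n \<rho>) (map (Scomp d \<rho>)) (\<epsilon>^2 / 4))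
                      / (real k * lam d \<rho>))"
proof -
  define H where "H = htilde (tuples d n) (delta_pow n \<rho>) (map (Scomp d \<rho>)) (\<epsilon>^2 / 4)"
  obtain I where "I \<subseteq> tuples d n" "(\<Sum>x\<in>I. delta_pow n \<rho> x) > 0"
    "2 * (1 - (\<Sum>x\<in>I. delta_pow n \<rho> x)) \<le> \<epsilon>^2 / 4"
    "\<And>x. x \<in> I \<Longrightarrow> delta_pow n \<rho> x > 0 \<Longrightarrow>
       real (card {y\<in>I. delta_pow n \<rho> y > 0 \<and> map (Scomp d \<rho>) y = map (Scomp d \<rho>) x}) \<le> 2 powr H"
    using htilde_witness[OF finite_tuples delta_pow_nonneg[OF assms(1)] sum_delta_pow[OF assms(1)],
        where e = "\<epsilon>^2 / 4" and Y = "map (Scomp d \<rho>)"]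
    unfolding H_def by auto
  then have "mu_eps k \<epsilon> (tuples d n) (tensor_pow n \<rho>) \<le> log 2 (2 powr H + real k * lam d \<rho>)"
    using assms(3) by (intro mu_eps_tensor_pow_le[OF assms(1,2,5)]) auto
  also have "2 powr H + real k * lam d \<rho> = real k * lam d \<rho> * (1 + 2 powr H / (real k * lam d \<rho>))"
    using assms(2,5) by (simp add: field_simps)
  also have "log 2 \<dots> = log 2 (real k) + log 2 (lam d \<rho>) + log 2 (1 + 2 powr H / (real k * lam d \<rho>))"
    using assms(2,5) by (simp add: log_mult_pos add_pos_nonneg)
  finally show ?thesis unfolding H_def .
qed

end
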